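(* Let $\mathcal{X}$ be a Banach space, $\mathcal{L}\in\mathcal{B}(\mathcal{X})$ the generator of a contractive uniformly continuous semigroup $(e^{t\mathcal{L}})_{t\ge0}$, and $M\in\mathcal{B}(\mathcal{X})$ a contraction such that $\|M^n-P\|_\infty\le\delta^n$ for a projection $P\in\mathcal{B}(\mathcal{X})$, some $\delta\in(0,1)$ and all $n\in\mathbb{N}$. Then for all $t\ge0$ and $n\in\mathbb{N}$, $$\Big\|\big(Me^{\frac tn\mathcal{L}}\big)^n-e^{tP\mathcal{L}P}P\Big\|_\infty\le c_p\frac{t\|\mathcal{L}\|_\infty}{n}+\frac{c_p+(1+e^{\tilde b})(1+c_p^2)}{2}\,\frac{t^2\|\mathcal{L}\|_\infty^2}{n}+\delta^n+\frac{2\delta}{1-\delta}\,\frac{e^{3t\|\mathcal{L}\|_\infty c_p}}{n},$$ where $c_p=\|\mathbf{1}-P\|_\infty$ and $e^{\tilde b}=\sup_{s\in[0,t]}\|e^{sP\mathcal{L}P}\|_\infty$.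
   Context: $\mathcal{B}(\mathcal{X})$: bounded operators with operator norm $\|\cdot\|_\infty$; $\mathbf{1}$ the identity; contraction: norm at most $1$; projection: bounded idempotent. Contractive semigroup: $\|e^{t\mathcal{L}}\|_\infty\le1$ for all $t\ge0$. *)

theory Defs
  imports "HOL-Analysis.Analysis"
begin

definition bl_pow :: "('a::real_normed_vector \<Rightarrow>\<^sub>L 'a) \<Rightarrow> nat \<Rightarrow> ('a \<Rightarrow>\<^sub>L 'a)" where
  "bl_pow A n = ((\<lambda>B. A o\<^sub>L B) ^^ n) id_blinfun"

definition bl_exp :: "('a::banach \<Rightarrow>\<^sub>L 'a) \<Rightarrow> ('a \<Rightarrow>\<^sub>L 'a)" where
  "bl_exp A = (\<Sum>k. (1 / fact k) *\<^sub>R bl_pow A k)"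

end

theory Submission
  imports Defs
begin

text \<open>Write \<open>\<tau> = t/n\<close>, \<open>A = M e\<^bsup>\<tau>L\<^esup>\<close>, \<open>G = PLP\<close>, \<open>Q = M - P\<close> and \<open>X\<^sub>j = e\<^bsup>j\<tau>G\<^esup>P\<close>.
  Then \<open>A\<^sup>n - e\<^bsup>tG\<^esup>P = A\<^sup>n(1 - P) + \<Sum>\<^sub>j A\<^bsup>n-1-j\<^esup>(A X\<^sub>j - X\<^sub>j\<^sub>+\<^sub>1)\<close>.
  Since \<open>M\<^sup>k\<close> converges to \<open>P\<close> geometrically, \<open>MP = P = PM\<close>, and \<open>A\<^sup>k\<close> stays within
  \<open>k\<tau>\<parallel>L\<parallel>\<close> of \<open>M\<^sup>k\<close>; this bounds the first term and the propagated parts \<open>A\<^sup>m Q\<close>.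
  In the one-step defect \<open>A X\<^sub>j - X\<^sub>j\<^sub>+\<^sub>1\<close> the first order terms cancel up to \<open>\<tau> Q L X\<^sub>j\<close>,
  and what remains are Taylor remainders of order \<open>(\<tau>\<parallel>L\<parallel>)\<^sup>2\<close>, \<open>n\<close> of which add up
  to \<open>O(t\<^sup>2\<parallel>L\<parallel>\<^sup>2/n)\<close>.\<close>

section \<open>The unitization of the bounded operators\<close>

text \<open>Bounded operators on a trivial space do not form a \<open>real_normed_algebra_1\<close> (the identity
  has norm \<open>0\<close>), so the library's \<open>exp\<close> is not available for them. Instead we compute in the
  unitization: the pair \<open>(T, c)\<close> stands for the operator \<open>T + c\<close>, normed by \<open>\<parallel>T\<parallel> + \<bar>c\<bar>\<close>.
  Estimates are expressed through \<open>opnorm\<close>, the operator norm of \<open>T + c\<close>, which is only a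
  seminorm on the unitization.\<close>

typedef (overloaded) 'a unitization = "UNIV :: (('a::banach \<Rightarrow>\<^sub>L 'a) \<times> real) set"
  morphisms rep_unitization Abs_unitization ..

setup_lifting type_definition_unitization

instantiation unitization :: (banach) real_normed_vector
begin

lift_definition zero_unitization :: "'a unitization" is 0 .

lift_definition plus_unitization :: "'a unitization \<Rightarrow> 'a unitization \<Rightarrow> 'a unitization" is "(+)" .

lift_definition minus_unitization :: "'a unitization \<Rightarrow> 'a unitization \<Rightarrow> 'a unitization" is "(-)" .

lift_definition uminus_unitization :: "'a unitization \<Rightarrow> 'a unitization" is uminus .

lift_definition scaleR_unitization :: "real \<Rightarrow> 'a unitization \<Rightarrow> 'a unitization" is scaleR .

lift_definition norm_unitization :: "'a unitization \<Rightarrow> real" is "\<lambda>(T, c). norm T + \<bar>c\<bar>" .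

definition dist_unitization :: "'a unitization \<Rightarrow> 'a unitization \<Rightarrow> real"
  where "dist_unitization x y = norm (x - y)"

definition sgn_unitization :: "'a unitization \<Rightarrow> 'a unitization"
  where "sgn_unitization x = inverse (norm x) *\<^sub>R x"

definition uniformity_unitization :: "('a unitization \<times> 'a unitization) filter"
  where "uniformity_unitization = (INF e\<in>{0<..}. principal {(x, y). dist x y < e})"

definition open_unitization :: "'a unitization set \<Rightarrow> bool"
  where "open_unitization S = (\<forall>x\<in>S. \<forall>\<^sub>F (x', y) in uniformity. x' = x \<longrightarrow> y \<in> S)"

instance
proof
  fix x y z :: "'a unitization" and a b :: real
  show "x + y + z = x + (y + z)" by transfer (simp add: algebra_simps)
  show "x + y = y + x" by transfer (simp add: algebra_simps)
  show "0 + x = x" by transfer simp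
  show "- x + x = 0" by transfer simp
  show "x - y = x + - y" by transfer simp
  show "a *\<^sub>R (x + y) = a *\<^sub>R x + a *\<^sub>R y" by transfer (simp add: algebra_simps)
  show "(a + b) *\<^sub>R x = a *\<^sub>R x + b *\<^sub>R x" by transfer (simp add: algebra_simps)
  show "a *\<^sub>R b *\<^sub>R x = (a * b) *\<^sub>R x" by transfer simp
  show "1 *\<^sub>R x = x" by transfer simp
  show "dist x y = norm (x - y)" by (simp add: dist_unitization_def)
  show "sgn x = inverse (norm x) *\<^sub>R x" by (simp add: sgn_unitization_def)
  show "(norm x = 0) = (x = 0)" by transfer (auto simp: zero_prod_def add_nonneg_eq_0_iff)
  show "norm (x + y) \<le> norm x + norm y"
    by transfer (clarsimp, smt (verit) norm_triangle_ineq abs_triangle_ineq)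
  show "norm (a *\<^sub>R x) = \<bar>a\<bar> * norm x" by transfer (auto simp: abs_mult algebra_simps)
qed (simp_all add: uniformity_unitization_def open_unitization_def)

end

lemma norm_compose_add_scaleR_le:
  fixes S T :: "'a::real_normed_vector \<Rightarrow>\<^sub>L 'a"
  shows "norm ((S o\<^sub>L T) + a *\<^sub>R T + b *\<^sub>R S) + \<bar>a * b\<bar> \<le> (norm S + \<bar>a\<bar>) * (norm T + \<bar>b\<bar>)"
proof -
  have "norm ((S o\<^sub>L T) + a *\<^sub>R T + b *\<^sub>R S) \<le> norm S * norm T + \<bar>a\<bar> * norm T + \<bar>b\<bar> * norm S"
    by (intro order_trans[OF norm_triangle_ineq] add_mono norm_blinfun_compose) auto
  then show ?thesis
    by (simp add: algebra_simps abs_mult)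
qed

instantiation unitization :: (banach) real_normed_algebra_1
begin

lift_definition one_unitization :: "'a unitization" is "(0, 1)" .

text \<open>\<open>(S + a)(T + b) = ST + aT + bS + ab\<close>\<close>

lift_definition times_unitization :: "'a unitization \<Rightarrow> 'a unitization \<Rightarrow> 'a unitization"
  is "\<lambda>(S, a) (T, b). ((S o\<^sub>L T) + a *\<^sub>R T + b *\<^sub>R S, a * b)" .

instance
proof
  fix x y z :: "'a unitization" and a :: real
  show "x * y * z = x * (y * z)"
    by transfer (auto intro!: blinfun_eqI simp: blinfun.bilinear_simps algebra_simps)
  show "(x + y) * z = x * z + y * z"
    by transfer (auto intro!: blinfun_eqI simp: blinfun.bilinear_simps algebra_simps)
  show "x * (y + z) = x * y + x * z"
    by transfer (auto intro!: blinfun_eqI simp: blinfun.bilinear_simps algebra_simps)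
  show "a *\<^sub>R x * y = a *\<^sub>R (x * y)"
    by transfer (auto intro!: blinfun_eqI simp: blinfun.bilinear_simps algebra_simps)
  show "x * a *\<^sub>R y = a *\<^sub>R (x * y)"
    by transfer (auto intro!: blinfun_eqI simp: blinfun.bilinear_simps algebra_simps)
  show "1 * x = x" by transfer auto
  show "x * 1 = x" by transfer auto
  show "(0::'a unitization) \<noteq> 1" by transfer (simp add: zero_prod_def)
  show "norm (1::'a unitization) = 1" by transfer simp
  show "norm (x * y) \<le> norm x * norm y"
    by transfer (auto simp: split_beta intro: norm_compose_add_scaleR_le)
qed

end

lemma bounded_linear_rep_unitization: "bounded_linear rep_unitization"
proof (rule bounded_linear_intro[where K = 1])
  fix x y :: "'a unitization" and r :: real
  show "rep_unitization (x + y) = rep_unitization x + rep_unitization y" by transfer simp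
  show "rep_unitization (r *\<^sub>R x) = r *\<^sub>R rep_unitization x" by transfer simp
  show "norm (rep_unitization x) \<le> norm x * 1" by transfer (clarsimp, metis norm_Pair_le real_norm_def)
qed

lemma bounded_linear_Abs_unitization: "bounded_linear Abs_unitization"
proof (rule bounded_linear_intro[where K = 2])
  fix x y :: "('a::banach \<Rightarrow>\<^sub>L 'a) \<times> real" and r :: real
  show "Abs_unitization (x + y) = Abs_unitization x + Abs_unitization y"
    by (simp add: plus_unitization.abs_eq)
  show "Abs_unitization (r *\<^sub>R x) = r *\<^sub>R Abs_unitization x"
    by (simp add: scaleR_unitization.abs_eq)
  show "norm (Abs_unitization x) \<le> norm x * 2"
    using norm_fst_le[of "fst x" "snd x"] norm_snd_le[of "snd x" "fst x"]
    by (simp add: norm_unitization.abs_eq split_beta)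
qed

instance unitization :: (banach) banach
proof
  fix X :: "nat \<Rightarrow> 'a unitization"
  assume "Cauchy X"
  then have "Cauchy (\<lambda>n. rep_unitization (X n))"
    by (rule bounded_linear.Cauchy[OF bounded_linear_rep_unitization])
  then obtain y where "(\<lambda>n. rep_unitization (X n)) \<longlonglongrightarrow> y"
    using convergent_eq_Cauchy by blast
  then have "(\<lambda>n. Abs_unitization (rep_unitization (X n))) \<longlonglongrightarrow> Abs_unitization y"
    by (rule bounded_linear.tendsto[OF bounded_linear_Abs_unitization])
  then show "convergent X"
    by (auto simp: rep_unitization_inverse convergent_def)
qed

lift_definition to_blinfun :: "'a::banach unitization \<Rightarrow> ('a \<Rightarrow>\<^sub>L 'a)"
  is "\<lambda>(T, c). T + c *\<^sub>R id_blinfun" .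

lift_definition of_blinfun :: "('a::banach \<Rightarrow>\<^sub>L 'a) \<Rightarrow> 'a unitization"
  is "\<lambda>T :: 'a \<Rightarrow>\<^sub>L 'a. (T, 0 :: real)" .

lemma to_blinfun_add: "to_blinfun (x + y) = to_blinfun x + to_blinfun y"
  by transfer (auto simp: algebra_simps)

lemma to_blinfun_diff: "to_blinfun (x - y) = to_blinfun x - to_blinfun y"
  by transfer (auto simp: algebra_simps)

lemma to_blinfun_scaleR: "to_blinfun (r *\<^sub>R x) = r *\<^sub>R to_blinfun x"
  by transfer (auto simp: algebra_simps)

lemma to_blinfun_one: "to_blinfun 1 = id_blinfun"
  by transfer simp

lemma to_blinfun_mult: "to_blinfun (x * y) = to_blinfun x o\<^sub>L to_blinfun y"
  by transfer (auto intro!: blinfun_eqI simp: algebra_simps blinfun.bilinear_simps)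

lemma to_blinfun_of_blinfun: "to_blinfun (of_blinfun T) = T"
  by transfer simp

lemma of_blinfun_diff: "of_blinfun (S - T) = of_blinfun S - of_blinfun T"
  by transfer simp

lemma of_blinfun_compose: "of_blinfun (S o\<^sub>L T) = of_blinfun S * of_blinfun T"
  by transfer simp

lemma norm_of_blinfun: "norm (of_blinfun T) = norm T"
  by transfer simp

lemma norm_to_blinfun_le: "norm (to_blinfun x) \<le> norm x"
proof transfer
  fix x :: "('a \<Rightarrow>\<^sub>L 'a) \<times> real"
  obtain T c where x: "x = (T, c)" by fastforce
  have "norm (T + c *\<^sub>R id_blinfun) \<le> norm T + \<bar>c\<bar> * norm (id_blinfun :: 'a \<Rightarrow>\<^sub>L 'a)"
    using norm_triangle_ineq[of T "c *\<^sub>R id_blinfun"] by simp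
  also have "\<dots> \<le> norm T + \<bar>c\<bar>"
    using norm_blinfun_id_le[where 'a = 'a] by (simp add: mult_left_le)
  finally show "norm (case x of (T, c) \<Rightarrow> T + c *\<^sub>R id_blinfun) \<le> (case x of (T, c) \<Rightarrow> norm T + \<bar>c\<bar>)"
    by (simp add: x)
qed

lemma bounded_linear_to_blinfun: "bounded_linear to_blinfun"
  by (rule bounded_linear_intro[where K = 1]) (auto simp: to_blinfun_add to_blinfun_scaleR norm_to_blinfun_le)

lemma bl_pow_to_blinfun: "bl_pow (to_blinfun x) k = to_blinfun (x ^ k)"
  by (induct k) (simp_all add: bl_pow_def to_blinfun_one to_blinfun_mult)

lemma bl_exp_to_blinfun: "bl_exp (to_blinfun x) = to_blinfun (exp x)"
proof -
  have "to_blinfun (exp x) = (\<Sum>k. to_blinfun (x ^ k /\<^sub>R fact k))"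
    unfolding exp_def by (rule bounded_linear.suminf[OF bounded_linear_to_blinfun summable_exp_generic])
  also have "\<dots> = bl_exp (to_blinfun x)"
    by (simp add: bl_exp_def to_blinfun_scaleR bl_pow_to_blinfun divide_inverse_commute)
  finally show ?thesis ..
qed

lemma norm_bl_exp_le: "norm (bl_exp T) \<le> exp (norm T)"
proof -
  have "bl_exp T = to_blinfun (exp (of_blinfun T))"
    using bl_exp_to_blinfun[of "of_blinfun T"] by (simp add: to_blinfun_of_blinfun)
  then show ?thesis
    using norm_to_blinfun_le[of "exp (of_blinfun T)"] norm_exp[of "of_blinfun T"]
    by (simp add: norm_of_blinfun)
qed

lemma of_blinfun_power:
  assumes "1 \<le> k"
  shows "of_blinfun T ^ k = of_blinfun (bl_pow T k)"
proof -
  obtain m where k: "k = Suc m"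
    using assms by (cases k) auto
  have "of_blinfun T ^ Suc m = of_blinfun (bl_pow T (Suc m))"
  proof (induct m)
    case 0
    have "T o\<^sub>L id_blinfun = T" by (intro blinfun_eqI) simp
    then show ?case by (simp add: bl_pow_def)
  next
    case (Suc m)
    then show ?case by (simp add: bl_pow_def of_blinfun_compose)
  qed
  then show ?thesis unfolding k .
qed

lemma of_blinfun_power_tendsto:
  fixes M P :: "'a::banach \<Rightarrow>\<^sub>L 'a"
  assumes "0 < \<delta>" "\<delta> < 1" and conv: "\<And>k. 1 \<le> k \<Longrightarrow> norm (bl_pow M k - P) \<le> \<delta> ^ k"
  shows "(\<lambda>k. of_blinfun M ^ k) \<longlonglongrightarrow> of_blinfun P"
proof -
  have "\<forall>\<^sub>F k in sequentially. norm (of_blinfun M ^ k - of_blinfun P) \<le> \<delta> ^ k"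
    using conv by (intro eventually_sequentiallyI[of 1]) (simp add: of_blinfun_power norm_of_blinfun flip: of_blinfun_diff)
  moreover have "(\<lambda>k. \<delta> ^ k) \<longlonglongrightarrow> 0"
    using assms by (intro LIMSEQ_power_zero) auto
  ultimately have "(\<lambda>k. of_blinfun M ^ k - of_blinfun P) \<longlonglongrightarrow> 0"
    by (rule Lim_null_comparison)
  then show ?thesis
    by (rule LIM_zero_cancel)
qed

lemma norm_bl_exp_scaleR_le:
  assumes "s \<in> {0..t}" and "norm T \<le> c"
  shows "norm (bl_exp (s *\<^sub>R T)) \<le> exp (t * c)"
proof -
  have "norm (bl_exp (s *\<^sub>R T)) \<le> exp (s * norm T)"
    using norm_bl_exp_le[of "s *\<^sub>R T"] assms by simp
  also have "\<dots> \<le> exp (t * c)"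
    using assms by (simp add: mult_mono)
  finally show ?thesis .
qed

lemma bdd_above_norm_bl_exp: "bdd_above ((\<lambda>s. norm (bl_exp (s *\<^sub>R T))) ` {0..t})"
  using norm_bl_exp_scaleR_le[OF _ order_refl] by (intro bdd_aboveI2) auto

lemma norm_compose_projection_le:
  fixes P L :: "'a::real_normed_vector \<Rightarrow>\<^sub>L 'a"
  assumes "norm P \<le> 1"
  shows "norm (P o\<^sub>L L o\<^sub>L P) \<le> norm L"
proof -
  have "norm (P o\<^sub>L L o\<^sub>L P) \<le> norm P * norm L * norm P"
    by (meson norm_blinfun_compose mult_right_mono norm_ge_zero order_trans)
  also have "\<dots> \<le> 1 * norm L * 1"
    using assms by (intro mult_mono) auto
  finally show ?thesis by simp
qed

section \<open>Powers and exponentials in Banach algebras\<close>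

lemma power_limit_absorbs:
  fixes m p :: "'b::real_normed_algebra_1"
  assumes "(\<lambda>k. m ^ k) \<longlonglongrightarrow> p"
  shows "m * p = p" and "p * m = p"
proof -
  have lim: "(\<lambda>k. m ^ Suc k) \<longlonglongrightarrow> p"
    using assms by (rule LIMSEQ_Suc)
  have "(\<lambda>k. m * m ^ k) \<longlonglongrightarrow> m * p"
    using assms by (intro tendsto_intros)
  with lim show "m * p = p"
    by (simp add: LIMSEQ_unique)
  have "(\<lambda>k. m ^ k * m) \<longlonglongrightarrow> p * m"
    using assms by (intro tendsto_intros)
  with lim show "p * m = p"
    unfolding power_Suc2 by (simp add: LIMSEQ_unique)
qed

lemma norm_power_limit_le_one:
  fixes m p :: "'b::real_normed_algebra_1"
  assumes "norm m \<le> 1" and "(\<lambda>k. m ^ k) \<longlonglongrightarrow> p"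
  shows "norm p \<le> 1"
proof (rule LIMSEQ_le_const2)
  show "(\<lambda>k. norm (m ^ k)) \<longlonglongrightarrow> norm p"
    using assms(2) by (rule tendsto_norm)
  show "\<exists>N. \<forall>k\<ge>N. norm (m ^ k) \<le> 1"
    using assms(1) by (meson norm_ge_zero norm_power_ineq order_trans power_le_one)
qed

lemma exp_mult_commute:
  fixes x y :: "'b::{real_normed_algebra_1, banach}"
  assumes "x * y = y * x"
  shows "exp x * y = y * exp x"
proof -
  have "exp x * y = (\<Sum>n. x ^ n /\<^sub>R fact n * y)"
    by (simp add: exp_def suminf_mult2 summable_exp_generic)
  also have "\<dots> = (\<Sum>n. y * (x ^ n /\<^sub>R fact n))"
    using power_commuting_commutes[OF assms] by (simp add: mult_scaleR_left)
  also have "\<dots> = y * exp x"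
    using suminf_mult[OF summable_exp_generic[of x], of y] by (simp add: exp_def)
  finally show ?thesis .
qed

lemma power_mult_telescope:
  fixes a :: "'b::ring_1"
  shows "a ^ n * x 0 - x n = (\<Sum>j<n. a ^ (n - Suc j) * (a * x j - x (Suc j)))"
proof -
  have "(\<Sum>j<n. a ^ (n - Suc j) * (a * x j - x (Suc j))) = (\<Sum>j<n. a ^ (n - j) * x j - a ^ (n - Suc j) * x (Suc j))"
  proof (rule sum.cong)
    fix j assume "j \<in> {..<n}"
    then have "a ^ (n - j) = a ^ (n - Suc j) * a"
      by (simp add: Suc_diff_Suc flip: power_Suc2)
    then show "a ^ (n - Suc j) * (a * x j - x (Suc j)) = a ^ (n - j) * x j - a ^ (n - Suc j) * x (Suc j)"
      by (simp add: mult.assoc right_diff_distrib)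
  qed simp
  also have "\<dots> = a ^ n * x 0 - x n"
    by (subst sum_lessThan_telescope') simp
  finally show ?thesis ..
qed

section \<open>The operator seminorm\<close>

definition opnorm :: "'a::banach unitization \<Rightarrow> real"
  where "opnorm x = norm (to_blinfun x)"

lemma opnorm_nonneg: "0 \<le> opnorm x"
  by (simp add: opnorm_def)

lemma opnorm_of_blinfun: "opnorm (of_blinfun T) = norm T"
  by (simp add: opnorm_def to_blinfun_of_blinfun)

lemma opnorm_one_le: "opnorm 1 \<le> 1"
  unfolding opnorm_def to_blinfun_one by (rule norm_blinfun_id_le)

lemma opnorm_mult: "opnorm (x * y) \<le> opnorm x * opnorm y"
  unfolding opnorm_def to_blinfun_mult by (rule norm_blinfun_compose)

lemma opnorm_mult3: "opnorm (x * y * z) \<le> opnorm x * opnorm y * opnorm z"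
  by (meson opnorm_mult opnorm_nonneg mult_right_mono order_trans)

lemma opnorm_add: "opnorm (x + y) \<le> opnorm x + opnorm y"
  unfolding opnorm_def to_blinfun_add by (rule norm_triangle_ineq)

lemma opnorm_diff: "opnorm (x - y) \<le> opnorm x + opnorm y"
  unfolding opnorm_def to_blinfun_diff by (rule norm_triangle_ineq4)

lemma opnorm_scaleR: "opnorm (r *\<^sub>R x) = \<bar>r\<bar> * opnorm x"
  by (simp add: opnorm_def to_blinfun_scaleR)

lemma opnorm_sum: "opnorm (sum f A) \<le> (\<Sum>a\<in>A. opnorm (f a))"
  unfolding opnorm_def linear_sum[OF bounded_linear.linear[OF bounded_linear_to_blinfun]]
  by (rule norm_sum)

lemma opnorm_power: "opnorm (x ^ k) \<le> opnorm x ^ k"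
proof (induct k)
  case 0
  then show ?case using opnorm_one_le by simp
next
  case (Suc k)
  have "opnorm (x ^ Suc k) \<le> opnorm x * opnorm (x ^ k)"
    using opnorm_mult by simp
  also have "\<dots> \<le> opnorm x * opnorm x ^ k"
    using Suc opnorm_nonneg by (intro mult_left_mono) auto
  finally show ?case by simp
qed

lemma opnorm_power_le_one: "opnorm x \<le> 1 \<Longrightarrow> opnorm (x ^ k) \<le> 1"
  by (meson opnorm_nonneg opnorm_power order_trans power_le_one)

lemmas to_blinfun_simps = opnorm_def to_blinfun_add to_blinfun_diff to_blinfun_scaleR to_blinfun_one
  to_blinfun_mult to_blinfun_of_blinfun bl_exp_to_blinfun[symmetric] bl_pow_to_blinfun[symmetric]

lemma opnorm_power_mult_diff_le:
  fixes a b y :: "'a::banach unitization"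
  assumes "\<And>k. opnorm (a ^ k) \<le> 1"
  shows "opnorm (a ^ n * y - b ^ n * y) \<le> opnorm (a - b) * (\<Sum>j<n. opnorm (b ^ j * y))"
proof -
  have "a ^ n * y - b ^ n * y = (\<Sum>j<n. a ^ (n - Suc j) * (a - b) * (b ^ j * y))"
    using power_mult_telescope[of a n "\<lambda>j. b ^ j * y"] by (simp add: algebra_simps)
  then have "opnorm (a ^ n * y - b ^ n * y) \<le> (\<Sum>j<n. opnorm (a ^ (n - Suc j) * (a - b) * (b ^ j * y)))"
    by (simp add: opnorm_sum)
  also have "\<dots> \<le> (\<Sum>j<n. opnorm (a - b) * opnorm (b ^ j * y))"
  proof (rule sum_mono)
    fix j
    have "opnorm (a ^ (n - Suc j) * (a - b) * (b ^ j * y))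
        \<le> opnorm (a ^ (n - Suc j)) * opnorm (a - b) * opnorm (b ^ j * y)"
      by (rule opnorm_mult3)
    also have "\<dots> \<le> 1 * opnorm (a - b) * opnorm (b ^ j * y)"
      using assms opnorm_nonneg by (intro mult_right_mono) auto
    finally show "opnorm (a ^ (n - Suc j) * (a - b) * (b ^ j * y)) \<le> opnorm (a - b) * opnorm (b ^ j * y)"
      by simp
  qed
  finally show ?thesis
    by (simp add: sum_distrib_left)
qed

lemma norm_diff_le_of_vector_derivative_le:
  fixes f :: "real \<Rightarrow> 'b::real_normed_vector"
  assumes "a \<le> b"
    and f': "\<And>x. (f has_vector_derivative f' x) (at x)"
    and \<phi>': "\<And>x. (\<phi> has_real_derivative \<phi>' x) (at x)"
    and le: "\<And>x. x \<in> {a..b} \<Longrightarrow> norm (f' x) \<le> \<phi>' x"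
  shows "norm (f b - f a) \<le> \<phi> b - \<phi> a"
proof (cases "a = b")
  case False
  show ?thesis
  proof (rule differentiable_bound_general)
    show "continuous_on {a..b} f"
      using f' by (blast intro: continuous_at_imp_continuous_on has_vector_derivative_continuous)
    show "continuous_on {a..b} \<phi>"
      using \<phi>' by (blast intro: continuous_at_imp_continuous_on DERIV_isCont)
    show "(\<phi> has_vector_derivative \<phi>' x) (at x)" for x
      using \<phi>' by (simp add: has_real_derivative_iff_has_vector_derivative)
  qed (use assms False in auto)
qed simp

lemma has_vector_derivative_exp_mult:
  fixes X Y :: "'a::banach unitization"
  shows "((\<lambda>s. to_blinfun (exp (s *\<^sub>R X) * Y)) has_vector_derivative to_blinfun (X * exp (s *\<^sub>R X) * Y)) (at s)"
proof -
  have "bounded_linear (\<lambda>u. to_blinfun (u * Y))"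
    using bounded_linear_compose[OF bounded_linear_to_blinfun bounded_linear_mult_left[of Y]]
    by (simp add: o_def)
  from bounded_linear.has_vector_derivative[OF this exp_scaleR_has_vector_derivative_left]
  show ?thesis by simp
qed

lemma opnorm_exp_mult_sub_le:
  fixes X Y :: "'a::banach unitization"
  assumes "0 \<le> \<tau>" and K: "\<And>\<sigma>. \<sigma> \<in> {0..\<tau>} \<Longrightarrow> opnorm (exp (\<sigma> *\<^sub>R X) * Y) \<le> K"
  shows "opnorm (exp (\<tau> *\<^sub>R X) * Y - Y) \<le> \<tau> * opnorm X * K"
proof -
  have "norm (to_blinfun (exp (\<tau> *\<^sub>R X) * Y) - to_blinfun (exp (0 *\<^sub>R X) * Y))
    \<le> opnorm X * K * \<tau> - opnorm X * K * 0"
  proof (rule norm_diff_le_of_vector_derivative_le[OF \<open>0 \<le> \<tau>\<close> has_vector_derivative_exp_mult])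
    show "((\<lambda>s. opnorm X * K * s) has_real_derivative opnorm X * K) (at x)" for x
      by (auto intro!: derivative_eq_intros)
    fix x assume "x \<in> {0..\<tau>}"
    then have "opnorm (X * (exp (x *\<^sub>R X) * Y)) \<le> opnorm X * K"
      using opnorm_mult order_trans K opnorm_nonneg mult_left_mono by metis
    then show "norm (to_blinfun (X * exp (x *\<^sub>R X) * Y)) \<le> opnorm X * K"
      by (simp add: opnorm_def mult.assoc)
  qed
  then show ?thesis
    by (simp add: opnorm_def to_blinfun_diff mult.commute mult.left_commute)
qed

lemma opnorm_exp_mult_taylor_le:
  fixes X Y :: "'a::banach unitization"
  assumes "0 \<le> \<tau>" and K: "\<And>\<sigma>. \<sigma> \<in> {0..\<tau>} \<Longrightarrow> opnorm (exp (\<sigma> *\<^sub>R X) * Y) \<le> K"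
  shows "opnorm (exp (\<tau> *\<^sub>R X) * Y - Y - \<tau> *\<^sub>R (X * Y)) \<le> \<tau>\<^sup>2 * (opnorm X)\<^sup>2 * K / 2"
proof -
  let ?f = "\<lambda>s. to_blinfun (exp (s *\<^sub>R X) * Y) - to_blinfun Y - s *\<^sub>R to_blinfun (X * Y)"
  have "norm (?f \<tau> - ?f 0) \<le> (opnorm X)\<^sup>2 * K / 2 * \<tau>\<^sup>2 - (opnorm X)\<^sup>2 * K / 2 * 0\<^sup>2"
  proof (rule norm_diff_le_of_vector_derivative_le[OF \<open>0 \<le> \<tau>\<close>])
    show "(?f has_vector_derivative to_blinfun (X * exp (x *\<^sub>R X) * Y) - to_blinfun (X * Y)) (at x)" for x
      by (auto intro!: derivative_eq_intros has_vector_derivative_exp_mult)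
    show "((\<lambda>s. (opnorm X)\<^sup>2 * K / 2 * s\<^sup>2) has_real_derivative (opnorm X)\<^sup>2 * K * x) (at x)" for x
      by (auto intro!: derivative_eq_intros)
    fix x assume x: "x \<in> {0..\<tau>}"
    have "to_blinfun (X * exp (x *\<^sub>R X) * Y) - to_blinfun (X * Y) = to_blinfun (X * (exp (x *\<^sub>R X) * Y - Y))"
      by (simp add: to_blinfun_diff algebra_simps)
    then have "norm (to_blinfun (X * exp (x *\<^sub>R X) * Y) - to_blinfun (X * Y))
        \<le> opnorm X * opnorm (exp (x *\<^sub>R X) * Y - Y)"
      using opnorm_mult unfolding opnorm_def by metis
    also have "\<dots> \<le> opnorm X * (x * opnorm X * K)"
      using opnorm_exp_mult_sub_le[of x X Y K] K x opnorm_nonneg by (intro mult_left_mono) auto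
    finally show "norm (to_blinfun (X * exp (x *\<^sub>R X) * Y) - to_blinfun (X * Y)) \<le> (opnorm X)\<^sup>2 * K * x"
      by (simp add: power2_eq_square algebra_simps)
  qed
  then show ?thesis
    by (simp add: opnorm_def to_blinfun_diff to_blinfun_add to_blinfun_scaleR algebra_simps)
qed

section \<open>The splitting error\<close>

lemma sum_power_Suc_le:
  fixes \<delta> :: real
  assumes "0 < \<delta>" "\<delta> < 1"
  shows "(\<Sum>j<m. \<delta> ^ Suc j) \<le> \<delta> / (1 - \<delta>)"
proof -
  have "(\<Sum>j<m. \<delta> ^ Suc j) = \<delta> * ((1 - \<delta> ^ m) / (1 - \<delta>))"
    using assms by (simp add: sum_distrib_left[symmetric] sum_gp_strict)
  also have "\<dots> \<le> \<delta> * (1 / (1 - \<delta>))"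
    using assms by (intro mult_left_mono divide_right_mono) auto
  finally show ?thesis by simp
qed

locale trotter_product =
  fixes L M P :: "'a::banach unitization" and \<delta> t eb :: real and n :: nat
  assumes L_contractive: "\<And>s. 0 \<le> s \<Longrightarrow> opnorm (exp (s *\<^sub>R L)) \<le> 1"
    and M_contraction: "opnorm M \<le> 1"
    and P_contraction: "opnorm P \<le> 1"
    and P_idem: "P * P = P"
    and M_P: "M * P = P"
    and P_M: "P * M = P"
    and M_power_conv: "\<And>k. 1 \<le> k \<Longrightarrow> opnorm (M ^ k - P) \<le> \<delta> ^ k"
    and \<delta>_pos: "0 < \<delta>" and \<delta>_less_1: "\<delta> < 1"
    and t_nonneg: "0 \<le> t"
    and n_pos: "1 \<le> n"
    and eb_bound: "\<And>s. s \<in> {0..t} \<Longrightarrow> opnorm (exp (s *\<^sub>R (P * L * P))) \<le> eb"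
begin

definition "\<tau> = t / real n"

definition "\<epsilon> = \<tau> * opnorm L"

definition "A = M * exp (\<tau> *\<^sub>R L)"

definition "G = P * L * P"

definition "Q = M - P"

definition "X j = exp ((real j * \<tau>) *\<^sub>R G) * P"

lemma \<tau>_nonneg: "0 \<le> \<tau>"
  using t_nonneg by (simp add: \<tau>_def)

lemma \<epsilon>_nonneg: "0 \<le> \<epsilon>"
  using \<tau>_nonneg opnorm_nonneg[of L] by (simp add: \<epsilon>_def)

lemma n_times_\<tau>: "real n * \<tau> = t"
  using n_pos by (simp add: \<tau>_def)

lemma eb_nonneg: "0 \<le> eb"
proof -
  have "opnorm (exp (0 *\<^sub>R (P * L * P))) \<le> eb"
    using t_nonneg by (intro eb_bound) simp
  then show ?thesis
    using opnorm_nonneg order_trans by blast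
qed

lemma opnorm_A_power: "opnorm (A ^ k) \<le> 1"
proof (rule opnorm_power_le_one)
  have "opnorm A \<le> opnorm M * opnorm (exp (\<tau> *\<^sub>R L))"
    unfolding A_def by (rule opnorm_mult)
  also have "\<dots> \<le> 1"
    using M_contraction L_contractive[OF \<tau>_nonneg] opnorm_nonneg by (intro mult_le_one)
  finally show "opnorm A \<le> 1" .
qed

lemma opnorm_exp_sub_one: "opnorm (exp (\<tau> *\<^sub>R L) - 1) \<le> \<epsilon>"
  using opnorm_exp_mult_sub_le[OF \<tau>_nonneg, of L 1 1] L_contractive by (simp add: \<epsilon>_def)

lemma opnorm_exp_remainder: "opnorm (exp (\<tau> *\<^sub>R L) - 1 - \<tau> *\<^sub>R L) \<le> \<epsilon>\<^sup>2 / 2"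
  using opnorm_exp_mult_taylor_le[OF \<tau>_nonneg, of L 1 1] L_contractive
  by (simp add: \<epsilon>_def power_mult_distrib)

lemma opnorm_A_sub_M: "opnorm (A - M) \<le> \<epsilon>"
proof -
  have "opnorm (A - M) \<le> opnorm M * opnorm (exp (\<tau> *\<^sub>R L) - 1)"
    using opnorm_mult[of M "exp (\<tau> *\<^sub>R L) - 1"] by (simp add: A_def algebra_simps)
  also have "\<dots> \<le> 1 * \<epsilon>"
    using M_contraction opnorm_exp_sub_one opnorm_nonneg \<epsilon>_nonneg by (intro mult_mono) auto
  finally show ?thesis by simp
qed

lemma M_power_mult_P: "M ^ j * P = P"
  by (induct j) (simp_all add: mult.assoc M_P)

lemma opnorm_M_power_mult_Q: "opnorm (M ^ j * Q) \<le> \<delta> ^ Suc j"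
proof -
  have "M ^ j * Q = M ^ Suc j - P"
    by (simp add: Q_def right_diff_distrib M_power_mult_P power_Suc2 power_commutes)
  then show ?thesis
    using M_power_conv[of "Suc j"] by simp
qed

lemma opnorm_M_power_mult_complement:
  assumes "1 \<le> j"
  shows "opnorm (M ^ j * (1 - P)) \<le> \<delta> ^ j"
proof -
  have "M ^ j * (1 - P) = M ^ j - P"
    by (simp add: right_diff_distrib M_power_mult_P)
  then show ?thesis
    using M_power_conv[OF assms] by simp
qed

lemma opnorm_A_power_mult_complement:
  "opnorm (A ^ n * (1 - P)) \<le> \<delta> ^ n + \<epsilon> * (opnorm (1 - P) + \<delta> / (1 - \<delta>))"
proof -
  obtain m where n: "n = Suc m"
    using n_pos by (cases n) auto
  have "(\<Sum>j<n. opnorm (M ^ j * (1 - P))) = opnorm (1 - P) + (\<Sum>j<m. opnorm (M ^ Suc j * (1 - P)))"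
    unfolding n sum.lessThan_Suc_shift by simp
  also have "\<dots> \<le> opnorm (1 - P) + (\<Sum>j<m. \<delta> ^ Suc j)"
    by (intro add_left_mono sum_mono opnorm_M_power_mult_complement) simp
  also have "\<dots> \<le> opnorm (1 - P) + \<delta> / (1 - \<delta>)"
    using sum_power_Suc_le[OF \<delta>_pos \<delta>_less_1] by simp
  finally have "opnorm (A - M) * (\<Sum>j<n. opnorm (M ^ j * (1 - P))) \<le> \<epsilon> * (opnorm (1 - P) + \<delta> / (1 - \<delta>))"
    by (rule mult_mono[OF opnorm_A_sub_M _ \<epsilon>_nonneg]) (simp add: sum_nonneg opnorm_nonneg)
  then have "opnorm (A ^ n * (1 - P) - M ^ n * (1 - P)) \<le> \<epsilon> * (opnorm (1 - P) + \<delta> / (1 - \<delta>))"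
    using opnorm_power_mult_diff_le[OF opnorm_A_power, of n "1 - P" M] by linarith
  moreover have "opnorm (M ^ n * (1 - P)) \<le> \<delta> ^ n"
    using opnorm_M_power_mult_complement[OF n_pos] .
  ultimately show ?thesis
    using opnorm_add[of "A ^ n * (1 - P) - M ^ n * (1 - P)" "M ^ n * (1 - P)"]
    unfolding diff_add_cancel by linarith
qed

lemma opnorm_A_power_mult_Q: "opnorm (A ^ m * Q) \<le> \<delta> ^ Suc m + \<epsilon> * (\<delta> / (1 - \<delta>))"
proof -
  have "(\<Sum>j<m. opnorm (M ^ j * Q)) \<le> (\<Sum>j<m. \<delta> ^ Suc j)"
    by (rule sum_mono) (rule opnorm_M_power_mult_Q)
  also have "\<dots> \<le> \<delta> / (1 - \<delta>)"
    by (rule sum_power_Suc_le[OF \<delta>_pos \<delta>_less_1])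
  finally have "opnorm (A - M) * (\<Sum>j<m. opnorm (M ^ j * Q)) \<le> \<epsilon> * (\<delta> / (1 - \<delta>))"
    by (rule mult_mono[OF opnorm_A_sub_M _ \<epsilon>_nonneg]) (simp add: sum_nonneg opnorm_nonneg)
  then have "opnorm (A ^ m * Q - M ^ m * Q) \<le> \<epsilon> * (\<delta> / (1 - \<delta>))"
    using opnorm_power_mult_diff_le[OF opnorm_A_power, of m Q M] by linarith
  then show ?thesis
    using opnorm_add[of "A ^ m * Q - M ^ m * Q" "M ^ m * Q"] opnorm_M_power_mult_Q[of m]
    unfolding diff_add_cancel by linarith
qed

lemma P_G: "P * G = G"
  by (simp add: G_def P_idem flip: mult.assoc)

lemma G_P: "G * P = G"
  by (simp add: G_def P_idem mult.assoc)

lemma P_mult_X: "P * X j = X j"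
proof -
  have "P * exp ((real j * \<tau>) *\<^sub>R G) = exp ((real j * \<tau>) *\<^sub>R G) * P"
    by (rule exp_mult_commute[symmetric]) (simp add: P_G G_P)
  then show ?thesis
    by (simp add: X_def P_idem flip: mult.assoc) (simp add: mult.assoc P_idem)
qed

lemma X_0: "X 0 = P"
  by (simp add: X_def)

lemma X_n: "X n = exp (t *\<^sub>R G) * P"
  by (simp add: X_def n_times_\<tau>)

lemma X_Suc: "X (Suc j) = exp (\<tau> *\<^sub>R G) * X j"
proof -
  have "(real (Suc j) * \<tau>) *\<^sub>R G = \<tau> *\<^sub>R G + (real j * \<tau>) *\<^sub>R G"
    by (simp add: algebra_simps)
  then have "exp ((real (Suc j) * \<tau>) *\<^sub>R G) = exp (\<tau> *\<^sub>R G) * exp ((real j * \<tau>) *\<^sub>R G)"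
    by (simp add: exp_add_commuting)
  then show ?thesis
    by (simp add: X_def mult.assoc)
qed

lemma opnorm_exp_mult_X:
  assumes "0 \<le> \<sigma>" and "\<sigma> + real j * \<tau> \<le> t"
  shows "opnorm (exp (\<sigma> *\<^sub>R G) * X j) \<le> eb"
proof -
  have "exp (\<sigma> *\<^sub>R G) * X j = exp ((\<sigma> + real j * \<tau>) *\<^sub>R G) * P"
    by (simp add: X_def scaleR_add_left exp_add_commuting mult.assoc)
  then have "opnorm (exp (\<sigma> *\<^sub>R G) * X j) \<le> opnorm (exp ((\<sigma> + real j * \<tau>) *\<^sub>R G)) * opnorm P"
    by (simp add: opnorm_mult)
  also have "\<dots> \<le> eb * 1"
    using assms \<tau>_nonneg eb_bound[of "\<sigma> + real j * \<tau>"] P_contraction opnorm_nonneg eb_nonneg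
    by (intro mult_mono) (auto simp: G_def)
  finally show ?thesis by simp
qed

lemma opnorm_X:
  assumes "j \<le> n"
  shows "opnorm (X j) \<le> eb"
proof -
  have "real j * \<tau> \<le> real n * \<tau>"
    using assms \<tau>_nonneg by (simp add: mult_right_mono)
  then show ?thesis
    using opnorm_exp_mult_X[of 0 j] by (simp add: n_times_\<tau>)
qed

lemma opnorm_G: "opnorm G \<le> opnorm L"
proof -
  have "opnorm G \<le> opnorm P * opnorm L * opnorm P"
    unfolding G_def by (rule opnorm_mult3)
  also have "\<dots> \<le> 1 * opnorm L * 1"
    using P_contraction opnorm_nonneg by (intro mult_mono) auto
  finally show ?thesis by simp
qed

text \<open>Since \<open>M X\<^sub>j = X\<^sub>j\<close> and \<open>P L X\<^sub>j = G X\<^sub>j\<close>, the first order terms cancel up to the \<open>Q\<close>-part.\<close>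

lemma step_defect_eq:
  "A * X j - X (Suc j) = \<tau> *\<^sub>R (Q * (L * X j)) + M * (exp (\<tau> *\<^sub>R L) - 1 - \<tau> *\<^sub>R L) * X j
    - (exp (\<tau> *\<^sub>R G) * X j - X j - \<tau> *\<^sub>R (G * X j))"
proof -
  define R where "R = exp (\<tau> *\<^sub>R L) - 1 - \<tau> *\<^sub>R L"
  have "A * X j = M * X j + \<tau> *\<^sub>R (M * (L * X j)) + M * R * X j"
    by (simp add: A_def R_def algebra_simps)
  also have "M * X j = X j"
    by (metis P_mult_X M_P mult.assoc)
  also have "M * (L * X j) = G * X j + Q * (L * X j)"
    by (simp add: Q_def G_def algebra_simps P_mult_X)
  finally show ?thesis
    unfolding X_Suc R_def by (simp add: algebra_simps)
qed

lemma opnorm_A_power_mult_Q_term: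
  assumes "j \<le> n"
  shows "opnorm (A ^ m * (\<tau> *\<^sub>R (Q * (L * X j)))) \<le> \<epsilon> * eb * opnorm (A ^ m * Q)"
proof -
  have "opnorm (A ^ m * (\<tau> *\<^sub>R (Q * (L * X j)))) = \<tau> * opnorm (A ^ m * Q * L * X j)"
    using \<tau>_nonneg by (simp add: opnorm_scaleR mult.assoc)
  also have "\<dots> \<le> \<tau> * (opnorm (A ^ m * Q) * opnorm L * opnorm (X j))"
    using \<tau>_nonneg by (intro mult_left_mono opnorm_mult3)
  also have "\<dots> \<le> \<tau> * (opnorm (A ^ m * Q) * opnorm L * eb)"
    using opnorm_X[OF assms] opnorm_nonneg \<tau>_nonneg by (intro mult_left_mono mult_nonneg_nonneg) auto
  finally show ?thesis
    by (simp add: \<epsilon>_def algebra_simps)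
qed

lemma opnorm_exp_taylor_X:
  assumes "j < n"
  shows "opnorm (exp (\<tau> *\<^sub>R G) * X j - X j - \<tau> *\<^sub>R (G * X j)) \<le> \<epsilon>\<^sup>2 * eb / 2"
proof -
  have "opnorm (exp (\<tau> *\<^sub>R G) * X j - X j - \<tau> *\<^sub>R (G * X j)) \<le> \<tau>\<^sup>2 * (opnorm G)\<^sup>2 * eb / 2"
  proof (rule opnorm_exp_mult_taylor_le[OF \<tau>_nonneg])
    fix \<sigma> assume "\<sigma> \<in> {0..\<tau>}"
    moreover have "real (Suc j) * \<tau> \<le> real n * \<tau>"
      using assms \<tau>_nonneg by (intro mult_right_mono) auto
    ultimately show "opnorm (exp (\<sigma> *\<^sub>R G) * X j) \<le> eb"
      by (intro opnorm_exp_mult_X) (auto simp: algebra_simps n_times_\<tau>)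
  qed
  also have "\<dots> \<le> \<tau>\<^sup>2 * (opnorm L)\<^sup>2 * eb / 2"
    using opnorm_G eb_nonneg opnorm_nonneg
    by (intro divide_right_mono mult_right_mono mult_left_mono power_mono) auto
  finally show ?thesis
    by (simp add: \<epsilon>_def power_mult_distrib)
qed

lemma opnorm_step_defect:
  assumes "j < n"
  shows "opnorm (A ^ m * (A * X j - X (Suc j))) \<le> \<epsilon> * eb * opnorm (A ^ m * Q) + \<epsilon>\<^sup>2 * eb"
proof -
  define R where "R = exp (\<tau> *\<^sub>R L) - 1 - \<tau> *\<^sub>R L"
  define T where "T = exp (\<tau> *\<^sub>R G) * X j - X j - \<tau> *\<^sub>R (G * X j)"
  have "opnorm (A ^ m * M * R * X j) \<le> opnorm (A ^ m) * opnorm M * opnorm R * opnorm (X j)"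
    using opnorm_mult[of "A ^ m * M * R" "X j"] opnorm_mult3[of "A ^ m" M R] opnorm_nonneg
    by (meson mult_right_mono order_trans)
  also have "\<dots> \<le> 1 * 1 * (\<epsilon>\<^sup>2 / 2) * eb"
    using opnorm_A_power M_contraction opnorm_exp_remainder opnorm_X assms opnorm_nonneg
    by (intro mult_mono mult_nonneg_nonneg) (auto simp: R_def)
  finally have R_term: "opnorm (A ^ m * (M * R * X j)) \<le> \<epsilon>\<^sup>2 / 2 * eb"
    by (simp add: mult.assoc)
  have T_term: "opnorm (A ^ m * T) \<le> \<epsilon>\<^sup>2 * eb / 2"
    using opnorm_mult[of "A ^ m" T] mult_left_le_one_le[OF opnorm_nonneg opnorm_nonneg opnorm_A_power]
      opnorm_exp_taylor_X[OF assms] unfolding T_def by (meson order_trans)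
  have defect: "A ^ m * (A * X j - X (Suc j)) = A ^ m * (\<tau> *\<^sub>R (Q * (L * X j))) + A ^ m * (M * R * X j) - A ^ m * T"
    unfolding step_defect_eq R_def T_def by (simp add: algebra_simps)
  show ?thesis
    unfolding defect using opnorm_diff[of "A ^ m * (\<tau> *\<^sub>R (Q * (L * X j))) + A ^ m * (M * R * X j)" "A ^ m * T"]
      opnorm_add[of "A ^ m * (\<tau> *\<^sub>R (Q * (L * X j)))" "A ^ m * (M * R * X j)"]
      opnorm_A_power_mult_Q_term[OF less_imp_le[OF assms], where m = m] R_term T_term
    by linarith
qed

lemma error_split:
  "opnorm (A ^ n - exp (t *\<^sub>R G) * P)
    \<le> opnorm (A ^ n * (1 - P)) + \<epsilon> * eb * (\<Sum>m<n. opnorm (A ^ m * Q)) + real n * (\<epsilon>\<^sup>2 * eb)"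
proof -
  have split: "A ^ n - exp (t *\<^sub>R G) * P = A ^ n * (1 - P) + (A ^ n * X 0 - X n)"
    by (simp add: X_0 X_n algebra_simps)
  have "opnorm (A ^ n * X 0 - X n) \<le> (\<Sum>j<n. opnorm (A ^ (n - Suc j) * (A * X j - X (Suc j))))"
    unfolding power_mult_telescope[of A n X] by (rule opnorm_sum)
  also have "\<dots> \<le> (\<Sum>j<n. \<epsilon> * eb * opnorm (A ^ (n - Suc j) * Q) + \<epsilon>\<^sup>2 * eb)"
    by (intro sum_mono opnorm_step_defect) simp
  also have "\<dots> = \<epsilon> * eb * (\<Sum>j<n. opnorm (A ^ (n - Suc j) * Q)) + real n * (\<epsilon>\<^sup>2 * eb)"
    by (simp add: sum.distrib sum_distrib_left)
  also have "(\<Sum>j<n. opnorm (A ^ (n - Suc j) * Q)) = (\<Sum>m<n. opnorm (A ^ m * Q))"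
    by (rule sum.nat_diff_reindex)
  finally show ?thesis
    unfolding split using opnorm_add[of "A ^ n * (1 - P)" "A ^ n * X 0 - X n"] by linarith
qed

lemma opnorm_complement_cases: "opnorm (1 - P) = 0 \<or> 1 \<le> opnorm (1 - P)"
proof -
  have "(1 - P) * (1 - P) = 1 - P"
    by (simp add: algebra_simps P_idem)
  then have "opnorm (1 - P) \<le> opnorm (1 - P) * opnorm (1 - P)"
    using opnorm_mult[of "1 - P" "1 - P"] by simp
  then show ?thesis
    using opnorm_nonneg[of "1 - P"] by (auto simp: mult_le_cancel_left1)
qed

lemma opnorm_mult_complement_eq_0:
  assumes "opnorm (1 - P) = 0"
  shows "opnorm (y * (1 - P)) = 0"
  using opnorm_mult[of y "1 - P"] opnorm_nonneg[of "y * (1 - P)"] assms by simp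

lemma Q_mult_complement: "Q * (1 - P) = Q"
  by (simp add: Q_def algebra_simps M_P P_idem)

theorem error_bound:
  "opnorm ((M * exp ((t / real n) *\<^sub>R L)) ^ n - exp (t *\<^sub>R (P * L * P)) * P)
    \<le> (if opnorm (1 - P) = 0 then 0
        else \<delta> ^ n + t * opnorm L / real n * (opnorm (1 - P) + \<delta> / (1 - \<delta>))
          + t * opnorm L / real n * eb * (\<delta> / (1 - \<delta>)) * (1 + t * opnorm L))
      + eb * (t\<^sup>2 * (opnorm L)\<^sup>2 / real n)"
proof -
  have lhs_eq: "(M * exp ((t / real n) *\<^sub>R L)) ^ n - exp (t *\<^sub>R (P * L * P)) * P = A ^ n - exp (t *\<^sub>R G) * P"
    by (simp add: A_def G_def \<tau>_def)
  have \<epsilon>_eq: "\<epsilon> = t * opnorm L / real n"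
    by (simp add: \<epsilon>_def \<tau>_def)
  have n_\<epsilon>: "real n * \<epsilon> = t * opnorm L"
    using n_pos by (simp add: \<epsilon>_eq)
  have n_term: "real n * (\<epsilon>\<^sup>2 * eb) = eb * (t\<^sup>2 * (opnorm L)\<^sup>2 / real n)"
    using n_pos by (simp add: \<epsilon>_eq power2_eq_square)
  show ?thesis
  proof (cases "opnorm (1 - P) = 0")
    case True
    then have "opnorm (A ^ n * (1 - P)) = 0" and "opnorm (A ^ m * Q) = 0" for m
      using opnorm_mult_complement_eq_0 Q_mult_complement by (metis mult.assoc)+
    then have "opnorm (A ^ n - exp (t *\<^sub>R G) * P) \<le> real n * (\<epsilon>\<^sup>2 * eb)"
      using error_split by simp
    then show ?thesis
      unfolding lhs_eq using True n_term by simp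
  next
    case False
    have "(\<Sum>m<n. opnorm (A ^ m * Q)) \<le> (\<Sum>m<n. \<delta> ^ Suc m + \<epsilon> * (\<delta> / (1 - \<delta>)))"
      by (intro sum_mono opnorm_A_power_mult_Q)
    also have "\<dots> = (\<Sum>m<n. \<delta> ^ Suc m) + real n * \<epsilon> * (\<delta> / (1 - \<delta>))"
      by (simp add: sum.distrib)
    also have "\<dots> \<le> \<delta> / (1 - \<delta>) * (1 + t * opnorm L)"
      using sum_power_Suc_le[OF \<delta>_pos \<delta>_less_1, of n] unfolding n_\<epsilon> by (simp add: algebra_simps)
    finally have "(\<Sum>m<n. opnorm (A ^ m * Q)) \<le> \<delta> / (1 - \<delta>) * (1 + t * opnorm L)" .
    then have "\<epsilon> * eb * (\<Sum>m<n. opnorm (A ^ m * Q)) \<le> \<epsilon> * eb * (\<delta> / (1 - \<delta>) * (1 + t * opnorm L))"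
      using \<epsilon>_nonneg eb_nonneg by (intro mult_left_mono mult_nonneg_nonneg)
    then have "\<epsilon> * eb * (\<Sum>m<n. opnorm (A ^ m * Q)) \<le> \<epsilon> * eb * (\<delta> / (1 - \<delta>)) * (1 + t * opnorm L)"
      by (simp only: mult.assoc)
    then show ?thesis
      unfolding lhs_eq if_not_P[OF False] \<epsilon>_eq[symmetric]
      using error_split opnorm_A_power_mult_complement n_term by linarith
  qed
qed

end

lemma exp_triple_lower_bound:
  fixes x e :: real
  assumes "0 \<le> x" "0 \<le> e" "e \<le> exp x"
  shows "x + x * e * (1 + x) \<le> exp (3 * x) - 1"
proof -
  have "1 + 2 * x + 2 * x\<^sup>2 \<le> exp (2 * x)"
    using exp_lower_Taylor_quadratic[of "2 * x"] assms(1) by (simp add: power2_eq_square)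
  moreover have "x * (1 + x) = x + x\<^sup>2"
    by (simp add: power2_eq_square algebra_simps)
  ultimately have "x * (1 + x) \<le> exp (2 * x) - 1"
    using assms(1) zero_le_power2[of x] by linarith
  then have "e * (x * (1 + x)) \<le> exp x * (exp (2 * x) - 1)"
    using assms by (intro mult_mono) auto
  then have "x * e * (1 + x) \<le> exp x * (exp (2 * x) - 1)"
    by (simp add: mult_ac)
  also have "\<dots> = exp (3 * x) - exp x"
    by (simp add: algebra_simps flip: exp_add)
  finally show ?thesis
    using exp_ge_add_one_self[of x] by linarith
qed

lemma trotter_bound_arith:
  fixes \<delta> t l cp eb :: real and n :: nat
  assumes \<delta>: "0 < \<delta>" "\<delta> < 1" and n: "1 \<le> n" and tl: "0 \<le> t" "0 \<le> l"
    and cp: "cp = 0 \<or> 1 \<le> cp" and eb: "0 \<le> eb" "eb \<le> exp (t * l)" "cp = 0 \<Longrightarrow> eb \<le> 1"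
  shows "(if cp = 0 then 0
          else \<delta> ^ n + t * l / real n * (cp + \<delta> / (1 - \<delta>))
            + t * l / real n * eb * (\<delta> / (1 - \<delta>)) * (1 + t * l))
        + eb * (t\<^sup>2 * l\<^sup>2 / real n)
      \<le> cp * t * l / real n + (cp + (1 + eb) * (1 + cp ^ 2)) / 2 * (t ^ 2 * l ^ 2 / real n)
        + \<delta> ^ n + 2 * \<delta> / (1 - \<delta>) * (exp (3 * t * l * cp) / real n)"
proof -
  define x where "x = t * l"
  define d where "d = \<delta> / (1 - \<delta>)"
  have x: "0 \<le> x" and d: "0 \<le> d" and q: "0 \<le> t\<^sup>2 * l\<^sup>2 / real n"
    using tl \<delta> by (simp_all add: x_def d_def)
  have eb_le: "eb \<le> (cp + (1 + eb) * (1 + cp ^ 2)) / 2"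
    using cp
  proof
    assume "1 \<le> cp"
    then have "(1 + eb) * 2 \<le> (1 + eb) * (1 + cp ^ 2)"
      using eb(1) one_le_power[of cp 2] by (intro mult_left_mono) auto
    then show ?thesis
      using \<open>1 \<le> cp\<close> by simp
  qed (use eb in simp)
  show ?thesis
  proof (cases "cp = 0")
    case True
    have "0 \<le> \<delta> ^ n" "0 \<le> 2 * \<delta> / ((1 - \<delta>) * real n)"
      using \<delta> by simp_all
    with True show ?thesis
      using mult_right_mono[OF eb_le q] by simp
  next
    case False
    with cp have "1 \<le> cp" by simp
    have "x + x * eb * (1 + x) \<le> exp (3 * x) - 1"
      using exp_triple_lower_bound x eb(1,2) by (simp add: x_def)
    also have "\<dots> \<le> 2 * exp (3 * x * cp)"
    proof -
      have "3 * x * 1 \<le> 3 * x * cp"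
        using \<open>1 \<le> cp\<close> x by (intro mult_left_mono) auto
      then show ?thesis
        by (smt (verit) exp_gt_zero exp_le_cancel_iff mult.right_neutral)
    qed
    finally have "d * ((x + x * eb * (1 + x)) / real n) \<le> d * (2 * exp (3 * x * cp) / real n)"
      using d by (intro mult_left_mono divide_right_mono) auto
    moreover have "t * l / real n * (cp + \<delta> / (1 - \<delta>)) + t * l / real n * eb * (\<delta> / (1 - \<delta>)) * (1 + t * l)
        = cp * t * l / real n + d * ((x + x * eb * (1 + x)) / real n)"
      by (simp add: x_def d_def algebra_simps add_divide_distrib)
    moreover have "2 * \<delta> / (1 - \<delta>) * (exp (3 * t * l * cp) / real n) = d * (2 * exp (3 * x * cp) / real n)"
      by (simp add: x_def d_def mult.assoc)
    ultimately show ?thesis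
      unfolding if_not_P[OF False] using mult_right_mono[OF eb_le q] by linarith
  qed
qed

lemma trotter_product_of_blinfun:
  fixes L M P :: "'a::banach \<Rightarrow>\<^sub>L 'a"
  assumes "\<And>s. 0 \<le> s \<Longrightarrow> norm (bl_exp (s *\<^sub>R L)) \<le> 1" and "norm M \<le> 1" and "P o\<^sub>L P = P"
    and "0 < \<delta>" "\<delta> < 1" and "\<And>k. 1 \<le> k \<Longrightarrow> norm (bl_pow M k - P) \<le> \<delta> ^ k"
    and "0 \<le> t" and "1 \<le> n"
    and "\<And>s. s \<in> {0..t} \<Longrightarrow> norm (bl_exp (s *\<^sub>R (P o\<^sub>L L o\<^sub>L P))) \<le> eb"
  shows "trotter_product (of_blinfun L) (of_blinfun M) (of_blinfun P) \<delta> t eb n"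
proof
  have lim: "(\<lambda>k. of_blinfun M ^ k) \<longlonglongrightarrow> of_blinfun P"
    by (rule of_blinfun_power_tendsto[OF assms(4-6)])
  show "of_blinfun M * of_blinfun P = of_blinfun P" "of_blinfun P * of_blinfun M = of_blinfun P"
    using power_limit_absorbs[OF lim] .
  show "opnorm (of_blinfun P) \<le> 1"
    using norm_power_limit_le_one[OF _ lim] assms(2) by (simp add: norm_of_blinfun opnorm_of_blinfun)
  show "opnorm (exp (s *\<^sub>R of_blinfun L)) \<le> 1" if "0 \<le> s" for s
    using assms(1)[OF that] by (simp add: to_blinfun_simps)
  show "opnorm (of_blinfun M ^ k - of_blinfun P) \<le> \<delta> ^ k" if "1 \<le> k" for k
    using assms(6)[OF that] by (simp add: to_blinfun_simps)
  show "opnorm (exp (s *\<^sub>R (of_blinfun P * of_blinfun L * of_blinfun P))) \<le> eb" if "s \<in> {0..t}" for s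
    using assms(9)[OF that] by (simp add: to_blinfun_simps)
  show "of_blinfun P * of_blinfun P = of_blinfun P"
    using assms(3) by (simp flip: of_blinfun_compose)
qed (use assms in \<open>simp_all add: opnorm_of_blinfun\<close>)

theorem proposition3p1:
  fixes L M P :: "'a::banach \<Rightarrow>\<^sub>L 'a" and \<delta> t :: real and n :: nat
  assumes contractive_semigroup: "\<And>s. s \<ge> 0 \<Longrightarrow> norm (bl_exp (s *\<^sub>R L)) \<le> 1"
    and M_contraction: "norm M \<le> 1"
    and P_projection: "P o\<^sub>L P = P"
    and \<delta>_range: "0 < \<delta>" "\<delta> < 1"
    and M_conv: "\<And>k::nat. k \<ge> 1 \<Longrightarrow> norm (bl_pow M k - P) \<le> \<delta> ^ k"
    and t_nonneg: "t \<ge> 0"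
    and n_pos: "n \<ge> 1"
  shows "let cp = norm (id_blinfun - P);
             eb = (SUP s\<in>{0..t}. norm (bl_exp (s *\<^sub>R (P o\<^sub>L L o\<^sub>L P))));
             l = norm L
         in norm (bl_pow (M o\<^sub>L bl_exp ((t / real n) *\<^sub>R L)) n
                  - (bl_exp (t *\<^sub>R (P o\<^sub>L L o\<^sub>L P)) o\<^sub>L P))
            \<le> cp * t * l / real n
              + (cp + (1 + eb) * (1 + cp ^ 2)) / 2 * (t ^ 2 * l ^ 2 / real n)
              + \<delta> ^ n
              + 2 * \<delta> / (1 - \<delta>) * (exp (3 * t * l * cp) / real n)"
proof -
  define eb where "eb = (SUP s\<in>{0..t}. norm (bl_exp (s *\<^sub>R (P o\<^sub>L L o\<^sub>L P))))"
  have eb_upper: "norm (bl_exp (s *\<^sub>R (P o\<^sub>L L o\<^sub>L P))) \<le> eb" if "s \<in> {0..t}" for s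
    unfolding eb_def using that bdd_above_norm_bl_exp by (rule cSUP_upper)
  interpret trotter_product "of_blinfun L" "of_blinfun M" "of_blinfun P" \<delta> t eb n
    by (rule trotter_product_of_blinfun[OF assms eb_upper])
  have "norm (P o\<^sub>L L o\<^sub>L P) \<le> norm L"
    using P_contraction by (intro norm_compose_projection_le) (simp add: opnorm_of_blinfun)
  then have eb_exp: "eb \<le> exp (t * norm L)"
    unfolding eb_def using t_nonneg by (intro cSUP_least norm_bl_exp_scaleR_le) auto
  have eb_one: "eb \<le> 1" if "norm (id_blinfun - P) = 0"
  proof -
    have "P o\<^sub>L L o\<^sub>L P = L"
      using that by (intro blinfun_eqI) simp
    then show ?thesis
      unfolding eb_def using contractive_semigroup t_nonneg by (intro cSUP_least) auto
  qed
  have lhs: "norm (bl_pow (M o\<^sub>L bl_exp ((t / real n) *\<^sub>R L)) n - (bl_exp (t *\<^sub>R (P o\<^sub>L L o\<^sub>L P)) o\<^sub>L P))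
      = opnorm ((of_blinfun M * exp ((t / real n) *\<^sub>R of_blinfun L)) ^ n
          - exp (t *\<^sub>R (of_blinfun P * of_blinfun L * of_blinfun P)) * of_blinfun P)"
    and cp: "opnorm (1 - of_blinfun P) = norm (id_blinfun - P)"
    by (simp_all add: to_blinfun_simps)
  show ?thesis
    unfolding Let_def lhs eb_def[symmetric]
    by (rule order_trans[OF error_bound[unfolded cp opnorm_of_blinfun]
          trotter_bound_arith[OF \<delta>_range n_pos t_nonneg norm_ge_zero
            opnorm_complement_cases[unfolded cp] eb_nonneg eb_exp eb_one]])
qed

end
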